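(* For every positive integer $m$ and every complex number $\alpha \neq 0$, $$\sum_{k=1}^m \frac{k^\alpha}{m-k+1} = \sum_{j=1}^m j!\, S(\alpha, j) \binom{m+1}{j} \left(H_{m+1} - H_j\right).$$
   Context: For a complex number $\alpha \neq 0$ and a positive integer $k$, the Stirling function of the second kind is $$S(\alpha, k) = \frac{1}{k!} \sum_{j=1}^k (-1)^{k-j} \binom{k}{j} j^\alpha,$$ where for a positive integer $j$, $j^\alpha = e^{\alpha \ln j}$ with $\ln j$ the real logarithm. $H_k = 1 + \frac12 + \cdots + \frac1k$ denotes the $k$-th harmonic number. *)

theory Defs
  imports "HOL-Analysis.Analysis"
begin

definition cpow_nat :: "nat \<Rightarrow> complex \<Rightarrow> complex" where
  "cpow_nat j \<alpha> = exp (\<alpha> * complex_of_real (ln (real j)))"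

definition stirling_fun :: "complex \<Rightarrow> nat \<Rightarrow> complex" where
  "stirling_fun \<alpha> k = (1 / of_nat (fact k)) *
     (\<Sum>j=1..k. (-1) ^ (k - j) * of_nat (k choose j) * cpow_nat j \<alpha>)"

end

theory Submission
  imports Defs
begin

(* Nothing about the powers j^alpha is used: the identity holds for an
   arbitrary sequence f in place of j |-> j^alpha.  Since j! S(alpha,j) is the
   alternating binomial transform  sum_{i<=j} (-1)^(j-i) C(j,i) f(i),  exchanging the
   order of summation on the right-hand side reduces the theorem to the kernel identity

     sum_{j=i..m} (-1)^(j-i) C(j,i) C(m+1,j) (H_{m+1} - H_j) = 1/(m-i+1)    (i <= m).

   Writing C(m+1,j) C(j,i) = C(m+1,i) C(m+1-i,j-i) and n = m-i, the kernel becomes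
   C(m+1,i) times an alternating binomial sum of order n+1 of the harmonic numbers
   H_{i+t}; the constant H_{m+1} is annihilated, and the remaining sum is
   -i! n!/(m+1)!, proved by induction on n via the difference rule for alternating
   binomial sums. *)

text \<open>Pascal's rule turns an alternating binomial sum of order \<open>n+1\<close> into the difference
  of two sums of order \<open>n\<close>, one of them for the shifted sequence.\<close>
lemma alternating_binomial_sum_Suc:
  fixes a :: "nat \<Rightarrow> 'a :: comm_ring_1"
  shows "(\<Sum>t\<le>Suc n. (-1)^t * of_nat (Suc n choose t) * a t) =
         (\<Sum>t\<le>n. (-1)^t * of_nat (n choose t) * a t)
       - (\<Sum>t\<le>n. (-1)^t * of_nat (n choose t) * a (Suc t))"
proof -
  have "(\<Sum>t\<le>Suc n. (-1)^t * of_nat (Suc n choose t) * a t) =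
        a 0 + (\<Sum>t\<le>n. (-1)^(Suc t) * of_nat (Suc n choose Suc t) * a (Suc t))"
    by (subst sum.atMost_Suc_shift) simp
  also have "\<dots> = a 0 + (\<Sum>t\<le>n. (-1)^(Suc t) * of_nat (n choose Suc t) * a (Suc t))
                 - (\<Sum>t\<le>n. (-1)^t * of_nat (n choose t) * a (Suc t))"
    by (simp add: sum.distrib sum_subtractf algebra_simps sum_negf)
  also have "a 0 + (\<Sum>t\<le>n. (-1)^(Suc t) * of_nat (n choose Suc t) * a (Suc t))
             = (\<Sum>t\<le>Suc n. (-1)^t * of_nat (n choose t) * a t)"
    by (subst sum.atMost_Suc_shift) simp
  also have "\<dots> = (\<Sum>t\<le>n. (-1)^t * of_nat (n choose t) * a t)"
    by (simp add: binomial_eq_0)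
  finally show ?thesis .
qed

lemma beta_quotient_recurrence:
  "fact i * fact k / fact (i + k + 1) - fact (Suc i) * fact k / fact (Suc i + k + 1)
     = (fact i * fact (Suc k) / fact (i + Suc k + 1) :: 'a :: field_char_0)"
proof -
  define F :: 'a where "F = fact (i + k + 1)"
  define N :: 'a where "N = of_nat (Suc (i + k + 1))"
  have nz: "F \<noteq> 0" "N \<noteq> 0" unfolding F_def N_def by (rule fact_nonzero) (rule of_nat_neq_0)
  have "fact (Suc (i + k + 1)) = N * F"
    unfolding F_def N_def by (rule fact_Suc)
  then have F2: "fact (Suc i + k + 1) = N * F" "fact (i + Suc k + 1) = N * F"
    by simp_all
  have FS: "fact (Suc i) = of_nat (Suc i) * (fact i :: 'a)" "fact (Suc k) = of_nat (Suc k) * (fact k :: 'a)"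
    by (simp_all only: fact_Suc)
  have N_diff: "N - of_nat (Suc i) = (of_nat (Suc k) :: 'a)"
    unfolding N_def by (simp only: of_nat_diff[symmetric]) simp
  have "fact i * fact k / F - of_nat (Suc i) * fact i * fact k / (N * F)
      = fact i * fact k * (N - of_nat (Suc i)) / (N * F)"
    using nz by (simp add: field_simps)
  then show ?thesis
    unfolding F2 FS F_def[symmetric] N_diff by (simp add: mult_ac)
qed

text \<open>Alternating binomial sums of shifted harmonic numbers:
  \<open>\<Sum>t\<le>k+1. (-1)^t C(k+1,t) H(i+t) = -B(i,k)\<close>, by induction on \<open>k\<close>, comparing the two
  recurrences above.\<close>
lemma alternating_binomial_harm:
  "(\<Sum>t\<le>Suc k. (-1)^t * of_nat (Suc k choose t) * harm (i + t))
     = - (fact i * fact k / fact (i + k + 1) :: 'a :: real_normed_field)"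
proof (induction k arbitrary: i)
  case 0
  have "(of_nat (Suc i) :: 'a) \<noteq> 0" by (rule of_nat_neq_0)
  then show ?case
    by (simp add: harm_Suc fact_Suc field_simps del: of_nat_Suc)
next
  case (Suc k)
  have "(\<Sum>t\<le>Suc (Suc k). (-1)^t * of_nat (Suc (Suc k) choose t) * harm (i + t) :: 'a)
      = (\<Sum>t\<le>Suc k. (-1)^t * of_nat (Suc k choose t) * harm (i + t))
      - (\<Sum>t\<le>Suc k. (-1)^t * of_nat (Suc k choose t) * harm (Suc i + t))"
    using alternating_binomial_sum_Suc[of "Suc k" "\<lambda>t. harm (i + t) :: 'a"]
    by (simp only: add_Suc_right add_Suc)
  also have "\<dots> = - (fact i * fact k / fact (i + k + 1))
                   + fact (Suc i) * fact k / fact (Suc i + k + 1)"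
    by (simp only: Suc.IH minus_minus diff_conv_add_uminus)
  also have "\<dots> = - (fact i * fact (Suc k) / fact (i + Suc k + 1))"
    unfolding beta_quotient_recurrence[of i k, where 'a='a, symmetric]
    by (simp only: minus_diff_eq uminus_add_conv_diff)
  finally show ?case .
qed

text \<open>The same sum with the gaps \<open>H(i+k+1) - H(i+t)\<close>: the constant \<open>H(i+k+1)\<close> is annihilated
  by the alternating binomial sum, leaving \<open>B(i,k)\<close>.\<close>
lemma alternating_binomial_harm_gap:
  "(\<Sum>t\<le>Suc k. (-1)^t * of_nat (Suc k choose t) * (harm (i + Suc k) - harm (i + t)))
     = (fact i * fact k / fact (i + k + 1) :: 'a :: real_normed_field)"
proof -
  have "(\<Sum>t\<le>Suc k. (-1)^t * of_nat (Suc k choose t) * (harm (i + Suc k) - harm (i + t)))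
      = harm (i + Suc k) * (\<Sum>t\<le>Suc k. (-1)^t * of_nat (Suc k choose t))
        - (\<Sum>t\<le>Suc k. (-1)^t * of_nat (Suc k choose t) * harm (i + t) :: 'a)"
    by (simp add: right_diff_distrib sum_subtractf sum_distrib_left mult_ac)
  also have "(\<Sum>t\<le>Suc k. (-1)^t * of_nat (Suc k choose t)) = (0 :: 'a)"
    by (rule choose_alternating_sum) simp
  finally show ?thesis
    by (simp only: alternating_binomial_harm mult_zero_right diff_0 minus_minus)
qed

text \<open>The kernel identity: the coefficient of \<open>f i\<close> after exchanging the summations in the
  main identity is \<open>1/(m-i+1)\<close>.\<close>
lemma binomial_harm_kernel:
  assumes "i \<le> m"
  shows "(\<Sum>j=i..m. (-1)^(j-i) * of_nat (j choose i) * of_nat ((m+1) choose j)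
                       * (harm (m+1) - harm j))
         = (1 :: 'a :: real_normed_field) / of_nat (m - i + 1)"
proof -
  define n where "n = m - i"
  define H :: 'a where "H = harm (m + 1)"
  have m_eq: "m = n + i" and top: "i + Suc n = m + 1" and top': "i + n + 1 = m + 1"
    and m1: "m + 1 - i = Suc n"
    using assms unfolding n_def by auto
  have "(\<Sum>j=i..m. (-1)^(j-i) * of_nat (j choose i) * of_nat ((m+1) choose j) * (H - harm j))
      = (\<Sum>t\<le>n. (-1)^t * of_nat ((i+t) choose i) * of_nat ((m+1) choose (i+t)) * (H - harm (i+t)))"
    by (rule sum.reindex_bij_witness[where i="\<lambda>t. i + t" and j="\<lambda>j. j - i"]) (auto simp: m_eq)
  also have "\<dots> = (\<Sum>t\<le>Suc n. (-1)^t * of_nat ((i+t) choose i) * of_nat ((m+1) choose (i+t))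
                                  * (H - harm (i+t)))"
    \<comment> \<open>the added term vanishes since \<open>i + Suc n = m + 1\<close>\<close>
    using top by (simp add: H_def)
  also have "\<dots> = of_nat ((m+1) choose i)
                   * (\<Sum>t\<le>Suc n. (-1)^t * of_nat (Suc n choose t) * (H - harm (i+t)))"
    unfolding sum_distrib_left
  proof (rule sum.cong[OF refl])
    fix t assume "t \<in> {..Suc n}"
    then have "i \<le> i + t" "i + t \<le> m + 1" using top by auto
    from choose_mult[OF this] m1
    have "((m+1) choose (i+t)) * ((i+t) choose i) = ((m+1) choose i) * (Suc n choose t)" by simp
    then have "(of_nat ((m+1) choose (i+t)) * of_nat ((i+t) choose i) :: 'a)
               = of_nat ((m+1) choose i) * of_nat (Suc n choose t)"
      by (metis of_nat_mult)
    then show "(-1)^t * of_nat ((i+t) choose i) * of_nat ((m+1) choose (i+t)) * (H - harm (i+t))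
        = of_nat ((m+1) choose i) * ((-1)^t * of_nat (Suc n choose t) * (H - harm (i+t)))"
      by (simp add: algebra_simps)
  qed
  also have "(\<Sum>t\<le>Suc n. (-1)^t * of_nat (Suc n choose t) * (H - harm (i+t)))
           = fact i * fact n / fact (m + 1)"
    using alternating_binomial_harm_gap[of n i, where 'a='a] unfolding H_def top top' .
  also have "of_nat ((m+1) choose i) = (fact (m+1) / (fact i * fact (Suc n)) :: 'a)"
    using binomial_fact[of i "m+1"] assms m1 by simp
  also have "fact (m+1) / (fact i * fact (Suc n)) * (fact i * fact n / fact (m+1))
           = (fact n / fact (Suc n) :: 'a)"
    by (simp add: field_simps del: fact_Suc)
  also have "\<dots> = 1 / of_nat (m - i + 1)"
    using m1 assms by (simp add: fact_Suc field_simps del: of_nat_Suc)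
  finally show ?thesis unfolding H_def .
qed

lemma harmonic_weighted_sum_binomial_transform:
  fixes f :: "nat \<Rightarrow> 'a :: real_normed_field"
  shows "(\<Sum>k=1..m. f k / of_nat (m - k + 1)) =
         (\<Sum>j=1..m. (\<Sum>i=1..j. (-1)^(j-i) * of_nat (j choose i) * f i)
                     * of_nat ((m + 1) choose j) * (harm (m + 1) - harm j))"
proof -
  define w :: "nat \<Rightarrow> 'a" where "w j = of_nat ((m + 1) choose j) * (harm (m + 1) - harm j)" for j
  have "(\<Sum>j=1..m. (\<Sum>i=1..j. (-1)^(j-i) * of_nat (j choose i) * f i) * w j)
      = (\<Sum>j=1..m. \<Sum>i | i \<in> {1..m} \<and> i \<le> j. (-1)^(j-i) * of_nat (j choose i) * f i * w j)"
  proof (rule sum.cong[OF refl])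
    fix j assume "j \<in> {1..m}"
    then have "{i. i \<in> {1..m} \<and> i \<le> j} = {1..j}" by auto
    then show "(\<Sum>i=1..j. (-1)^(j-i) * of_nat (j choose i) * f i) * w j
        = (\<Sum>i | i \<in> {1..m} \<and> i \<le> j. (-1)^(j-i) * of_nat (j choose i) * f i * w j)"
      by (simp add: sum_distrib_right)
  qed
  also have "\<dots> = (\<Sum>i=1..m. \<Sum>j | j \<in> {1..m} \<and> i \<le> j. (-1)^(j-i) * of_nat (j choose i) * f i * w j)"
    by (rule sum.swap_restrict) auto
  also have "\<dots> = (\<Sum>i=1..m. f i / of_nat (m - i + 1))"
  proof (rule sum.cong[OF refl])
    fix i assume i: "i \<in> {1..m}"
    then have "{j. j \<in> {1..m} \<and> i \<le> j} = {i..m}" by auto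
    then have "(\<Sum>j | j \<in> {1..m} \<and> i \<le> j. (-1)^(j-i) * of_nat (j choose i) * f i * w j)
        = f i * (\<Sum>j=i..m. (-1)^(j-i) * of_nat (j choose i) * w j)"
      by (simp add: sum_distrib_left mult_ac)
    also have "(\<Sum>j=i..m. (-1)^(j-i) * of_nat (j choose i) * w j) = 1 / of_nat (m - i + 1)"
      using binomial_harm_kernel[of i m] i unfolding w_def by (simp add: mult.assoc)
    finally show "(\<Sum>j | j \<in> {1..m} \<and> i \<le> j. (-1)^(j-i) * of_nat (j choose i) * f i * w j)
        = f i / of_nat (m - i + 1)"
      by simp
  qed
  finally show ?thesis unfolding w_def by (simp add: mult.assoc)
qed

text \<open>Since \<open>j! S(\<alpha>,j)\<close> is the alternating binomial transform of \<open>k \<mapsto> k^\<alpha>\<close>, the theorem is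
  the instance \<open>f k = k^\<alpha>\<close> of the general identity.\<close>
theorem proposition4:
  fixes m :: nat and \<alpha> :: complex
  assumes "m \<ge> 1" and "\<alpha> \<noteq> 0"
  shows "(\<Sum>k=1..m. cpow_nat k \<alpha> / of_nat (m - k + 1)) =
         (\<Sum>j=1..m. of_nat (fact j) * stirling_fun \<alpha> j * of_nat ((m + 1) choose j)
                      * (harm (m + 1) - harm j))"
proof -
  have transform: "of_nat (fact j) * stirling_fun \<alpha> j
      = (\<Sum>i=1..j. (-1)^(j-i) * of_nat (j choose i) * cpow_nat i \<alpha>)" for j
    by (simp add: stirling_fun_def)
  show ?thesis
    unfolding transform by (rule harmonic_weighted_sum_binomial_transform)
qed

end
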